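(* Let $A$ be an order-unit space with order unit $1$, and let $L$ be a seminorm on $A$ (taking finite values) such that $L(1)=0$. Set $\mathcal B_1=\{a\in A: L(a)\le 1\}$, and let $\tilde A=A/\mathbb R 1$ with its quotient norm $\|\cdot\|^{\sim}$. Then: (a) $\rho_L$ gives $S(A)$ finite diameter if and only if the image of $\mathcal B_1$ in $\tilde A$ is bounded for $\|\cdot\|^{\sim}$; (b) the topology on $S(A)$ determined by $\rho_L$ coincides with the weak-$*$ topology if and only if the image of $\mathcal B_1$ in $\tilde A$ is totally bounded for $\|\cdot\|^{\sim}$.
   Context: An order-unit space may be taken concretely as a real linear space of self-adjoint bounded operators on a Hilbert space containing the identity operator $1$ (the order unit), with the usual operator ordering and operator norm (it need not be complete). Its state space $S(A)$ is the set of positive linear functionals $\mu$ on $A$ with $\mu(1)=1$, with the weak-$*$ topology. For a seminorm $L$ on $A$, the (possibly $+\infty$-valued) metric $\rho_L$ on $S(A)$ is $\rho_L(\mu,\nu)=\sup\{|\mu(a)-\nu(a)|: a\in A,\ L(a)\le 1\}$. *)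

theory Defs
  imports "HOL-Analysis.Analysis"
begin

text \<open>Concrete order-unit spaces: real linear spaces of bounded self-adjoint operators on a
(real) Hilbert space containing the identity operator, with operator ordering and operator norm.\<close>

definition self_adjoint :: "('h::real_inner \<Rightarrow>\<^sub>L 'h) \<Rightarrow> bool" where
  "self_adjoint T \<longleftrightarrow> (\<forall>x y. inner (blinfun_apply T x) y = inner x (blinfun_apply T y))"

definition op_le :: "('h::real_inner \<Rightarrow>\<^sub>L 'h) \<Rightarrow> ('h \<Rightarrow>\<^sub>L 'h) \<Rightarrow> bool" where
  "op_le T S \<longleftrightarrow> (\<forall>x. inner (blinfun_apply T x) x \<le> inner (blinfun_apply S x) x)"

definition order_unit_space :: "('h::{real_inner,complete_space} \<Rightarrow>\<^sub>L 'h) set \<Rightarrow> bool" where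
  "order_unit_space A \<longleftrightarrow> subspace A \<and> (\<forall>T\<in>A. self_adjoint T) \<and> id_blinfun \<in> A"

text \<open>State space: positive linear functionals on A taking value 1 at the order unit.
  Functionals are represented as functions on the whole operator type that vanish outside A.\<close>
definition state_space :: "('h::{real_inner,complete_space} \<Rightarrow>\<^sub>L 'h) set \<Rightarrow> (('h \<Rightarrow>\<^sub>L 'h) \<Rightarrow> real) set" where
  "state_space A = {\<mu>. (\<forall>a\<in>A. \<forall>b\<in>A. \<mu> (a + b) = \<mu> a + \<mu> b)
                       \<and> (\<forall>t. \<forall>a\<in>A. \<mu> (t *\<^sub>R a) = t * \<mu> a)
                       \<and> (\<forall>a\<in>A. op_le 0 a \<longrightarrow> 0 \<le> \<mu> a)
                       \<and> \<mu> id_blinfun = 1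
                       \<and> (\<forall>a. a \<notin> A \<longrightarrow> \<mu> a = 0)}"

definition weak_star_topology :: "('h::{real_inner,complete_space} \<Rightarrow>\<^sub>L 'h) set \<Rightarrow> (('h \<Rightarrow>\<^sub>L 'h) \<Rightarrow> real) topology" where
  "weak_star_topology A =
     topology_generated_by {{\<mu> \<in> state_space A. \<mu> a \<in> U} | a U. a \<in> A \<and> open U}"

definition seminorm_on :: "('h::{real_inner,complete_space} \<Rightarrow>\<^sub>L 'h) set \<Rightarrow> (('h \<Rightarrow>\<^sub>L 'h) \<Rightarrow> real) \<Rightarrow> bool" where
  "seminorm_on A L \<longleftrightarrow> (\<forall>a\<in>A. \<forall>b\<in>A. L (a + b) \<le> L a + L b) \<and> (\<forall>t. \<forall>a\<in>A. L (t *\<^sub>R a) = \<bar>t\<bar> * L a)"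

definition lip_ball :: "('h::{real_inner,complete_space} \<Rightarrow>\<^sub>L 'h) set \<Rightarrow> (('h \<Rightarrow>\<^sub>L 'h) \<Rightarrow> real) \<Rightarrow> ('h \<Rightarrow>\<^sub>L 'h) set" where
  "lip_ball A L = {a \<in> A. L a \<le> 1}"

definition rho_L :: "('h::{real_inner,complete_space} \<Rightarrow>\<^sub>L 'h) set \<Rightarrow> (('h \<Rightarrow>\<^sub>L 'h) \<Rightarrow> real)
                     \<Rightarrow> (('h \<Rightarrow>\<^sub>L 'h) \<Rightarrow> real) \<Rightarrow> (('h \<Rightarrow>\<^sub>L 'h) \<Rightarrow> real) \<Rightarrow> ereal" where
  "rho_L A L \<mu> \<nu> = (SUP a \<in> lip_ball A L. ereal \<bar>\<mu> a - \<nu> a\<bar>)"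

definition rho_topology :: "('h::{real_inner,complete_space} \<Rightarrow>\<^sub>L 'h) set \<Rightarrow> (('h \<Rightarrow>\<^sub>L 'h) \<Rightarrow> real)
                            \<Rightarrow> (('h \<Rightarrow>\<^sub>L 'h) \<Rightarrow> real) topology" where
  "rho_topology A L =
     topology_generated_by {{\<nu> \<in> state_space A. rho_L A L \<mu> \<nu> < ereal r} | \<mu> r. \<mu> \<in> state_space A \<and> r > 0}"

definition quot_norm :: "('h::{real_inner,complete_space} \<Rightarrow>\<^sub>L 'h) \<Rightarrow> real" where
  "quot_norm a = (INF t::real. norm (a - t *\<^sub>R id_blinfun))"

definition quot_totally_bounded :: "('h::{real_inner,complete_space} \<Rightarrow>\<^sub>L 'h) set \<Rightarrow> bool" where
  "quot_totally_bounded B \<longleftrightarrow>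
     (\<forall>e>0. \<exists>F. finite F \<and> F \<subseteq> B \<and> (\<forall>a\<in>B. \<exists>f\<in>F. quot_norm (a - f) < e))"

end

theory Submission
  imports Defs
begin

text \<open>
  For \<open>a \<in> A\<close> the oscillation \<open>sup |\<mu> a - \<nu> a|\<close> of \<open>a\<close> over states is comparable to its
  quotient norm: it is at most \<open>2 \<parallel>a\<parallel>\<^sup>~\<close>, and conversely \<open>\<parallel>a - t 1\<parallel> \<le> sup\<^sub>\<mu> |\<mu> a - t|\<close>, because
  the norm of a self-adjoint operator is its numerical radius, which vector states compute.

  For (b), the subbasic weak-* sets are always \<open>\<rho>\<^sub>L\<close>-open because \<open>L\<close> is a seminorm. If the
  image of \<open>B\<^sub>1\<close> is totally bounded, a finite net of it turns a \<open>\<rho>\<^sub>L\<close>-ball around any of its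
  points into a finite intersection of subbasic weak-* sets. Conversely, if the \<open>\<rho>\<^sub>L\<close>-balls are
  weak-* open, weak-* compactness of \<open>S(A)\<close> yields finite \<open>\<rho>\<^sub>L\<close>-nets of states; \<open>\<rho>\<^sub>L\<close> is finite
  between any two states, because a \<open>\<rho>\<^sub>L\<close>-ball contains an initial piece of every segment
  starting at its centre; and sorting \<open>B\<^sub>1\<close> by the rounded values \<open>g a - g' a\<close>, for pairs of
  points \<open>g, g'\<close> of a net, yields a finite net of \<open>B\<^sub>1\<close> modulo \<open>\<real>1\<close>.
\<close>

lemma norm_blinfun_le_numerical_radius:
  fixes b :: "'h::real_inner \<Rightarrow>\<^sub>L 'h"
  assumes "self_adjoint b" and "0 \<le> w"
    and radius: "\<And>x. \<bar>inner (blinfun_apply b x) x\<bar> \<le> w * (norm x)\<^sup>2"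
  shows "norm b \<le> w"
proof -
  have polar: "4 * inner (blinfun_apply b u) v \<le> 2 * w * ((norm u)\<^sup>2 + (norm v)\<^sup>2)" for u v
  proof -
    have "4 * inner (blinfun_apply b u) v
        = inner (blinfun_apply b (u + v)) (u + v) - inner (blinfun_apply b (u - v)) (u - v)"
    proof -
      have "inner (blinfun_apply b v) u = inner (blinfun_apply b u) v"
        using \<open>self_adjoint b\<close> unfolding self_adjoint_def by (metis inner_commute)
      then show ?thesis
        by (simp add: blinfun.add_right blinfun.diff_right inner_add_left inner_add_right
            inner_diff_left inner_diff_right)
    qed
    also have "\<dots> \<le> w * (norm (u + v))\<^sup>2 + w * (norm (u - v))\<^sup>2"
      using radius[of "u + v"] radius[of "u - v"] by (simp add: abs_le_iff)
    also have "\<dots> = 2 * w * ((norm u)\<^sup>2 + (norm v)\<^sup>2)"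
      by (simp add: power2_norm_eq_inner inner_commute algebra_simps)
    finally show ?thesis .
  qed
  show ?thesis
  proof (rule norm_blinfun_bound[OF \<open>0 \<le> w\<close>])
    fix x
    let ?y = "blinfun_apply b x"
    show "norm ?y \<le> w * norm x"
    proof (cases "?y = 0")
      case False
      then have "x \<noteq> 0" by auto
      define v where "v = (norm x / norm ?y) *\<^sub>R ?y"
      have "inner ?y v = norm x * norm ?y"
        using False by (simp add: v_def power2_norm_eq_inner[symmetric] power2_eq_square)
      moreover have "norm v = norm x"
        using False by (simp add: v_def)
      ultimately have "norm x * norm ?y \<le> norm x * (w * norm x)"
        using polar[of x v] by (simp add: power2_eq_square algebra_simps)
      then show ?thesis
        using \<open>x \<noteq> 0\<close> by simp
    qed (simp add: \<open>0 \<le> w\<close>)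
  qed
qed

lemma openin_topology_generated_by_coarsest:
  assumes "openin (topology_generated_by S) U" and "\<And>s. s \<in> S \<Longrightarrow> openin X s"
  shows "openin X U"
  by (rule generate_topology_on_coarsest[of "openin X" S U])
    (use assms openin_topology_generated_by in auto)

lemma finite_net_for_bounded_functions:
  fixes \<phi> :: "'i \<Rightarrow> 'a \<Rightarrow> real"
  assumes "finite I" and bounded: "\<And>i. i \<in> I \<Longrightarrow> \<exists>M. \<forall>a\<in>B. \<bar>\<phi> i a\<bar> \<le> M" and "\<epsilon> > 0"
  shows "\<exists>F. finite F \<and> F \<subseteq> B \<and> (\<forall>a\<in>B. \<exists>f\<in>F. \<forall>i\<in>I. \<bar>\<phi> i a - \<phi> i f\<bar> < \<epsilon>)"
proof -
  obtain M where M: "\<And>i a. i \<in> I \<Longrightarrow> a \<in> B \<Longrightarrow> \<bar>\<phi> i a\<bar> \<le> M i"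
    using bounded by metis
  define cell where "cell a = restrict (\<lambda>i. \<lfloor>\<phi> i a / \<epsilon>\<rfloor>) I" for a
  have "cell ` B \<subseteq> (\<Pi>\<^sub>E i\<in>I. {-\<lceil>M i / \<epsilon>\<rceil>..\<lceil>M i / \<epsilon>\<rceil>})"
  proof (clarsimp simp: cell_def)
    fix a i assume "a \<in> B" "i \<in> I"
    then have "\<bar>\<phi> i a / \<epsilon>\<bar> \<le> M i / \<epsilon>"
      using M[of i a] \<open>\<epsilon> > 0\<close> by (simp add: divide_right_mono)
    then show "- \<lceil>M i / \<epsilon>\<rceil> \<le> \<lfloor>\<phi> i a / \<epsilon>\<rfloor> \<and> \<lfloor>\<phi> i a / \<epsilon>\<rfloor> \<le> \<lceil>M i / \<epsilon>\<rceil>"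
      unfolding abs_le_iff by linarith
  qed
  then have "finite (cell ` B)"
    by (rule finite_subset) (simp add: \<open>finite I\<close> finite_PiE)
  define F where "F = inv_into B cell ` cell ` B"
  show ?thesis
  proof (intro exI conjI ballI)
    show "finite F" "F \<subseteq> B"
      using \<open>finite (cell ` B)\<close> by (auto simp: F_def inv_into_into)
  next
    fix a assume "a \<in> B"
    define f where "f = inv_into B cell (cell a)"
    have "f \<in> F" using \<open>a \<in> B\<close> by (simp add: F_def f_def)
    moreover have "\<bar>\<phi> i a - \<phi> i f\<bar> < \<epsilon>" if "i \<in> I" for i
    proof -
      have "cell f = cell a"
        using \<open>a \<in> B\<close> by (simp add: f_def f_inv_into_f)
      then have "\<lfloor>\<phi> i a / \<epsilon>\<rfloor> = \<lfloor>\<phi> i f / \<epsilon>\<rfloor>"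
        using that by (metis cell_def restrict_apply')
      then have "\<bar>\<phi> i a / \<epsilon> - \<phi> i f / \<epsilon>\<bar> < 1"
        by linarith
      then show ?thesis
        using \<open>\<epsilon> > 0\<close> by (simp flip: diff_divide_distrib)
    qed
    ultimately show "\<exists>f\<in>F. \<forall>i\<in>I. \<bar>\<phi> i a - \<phi> i f\<bar> < \<epsilon>" by blast
  qed
qed

lemma lip_ball_subset: "lip_ball A L \<subseteq> A"
  by (auto simp: lip_ball_def)

lemma abs_diff_le_rho_L: "a \<in> lip_ball A L \<Longrightarrow> ereal \<bar>\<mu> a - \<nu> a\<bar> \<le> rho_L A L \<mu> \<nu>"
  unfolding rho_L_def by (rule SUP_upper)

lemma rho_L_le: "(\<And>a. a \<in> lip_ball A L \<Longrightarrow> \<bar>\<mu> a - \<nu> a\<bar> \<le> c) \<Longrightarrow> rho_L A L \<mu> \<nu> \<le> ereal c"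
  unfolding rho_L_def by (rule SUP_least) simp

lemma abs_diff_less_if_rho_L_less:
  assumes "rho_L A L \<mu> \<nu> < ereal r" and "a \<in> lip_ball A L"
  shows "\<bar>\<mu> a - \<nu> a\<bar> < r"
  using order.strict_trans1[OF abs_diff_le_rho_L[OF assms(2)] assms(1)] by simp

definition rho_ball ::
  "('h::{real_inner,complete_space} \<Rightarrow>\<^sub>L 'h) set \<Rightarrow> (('h \<Rightarrow>\<^sub>L 'h) \<Rightarrow> real)
    \<Rightarrow> (('h \<Rightarrow>\<^sub>L 'h) \<Rightarrow> real) \<Rightarrow> real \<Rightarrow> (('h \<Rightarrow>\<^sub>L 'h) \<Rightarrow> real) set" where
  "rho_ball A L \<mu> r = {\<nu> \<in> state_space A. rho_L A L \<mu> \<nu> < ereal r}"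

lemma rho_topology_eq:
  "rho_topology A L = topology_generated_by {rho_ball A L \<mu> r | \<mu> r. \<mu> \<in> state_space A \<and> r > 0}"
  by (simp add: rho_topology_def rho_ball_def)

lemma centre_in_rho_ball:
  assumes "\<mu> \<in> state_space A" and "r > 0"
  shows "\<mu> \<in> rho_ball A L \<mu> r"
proof -
  have "rho_L A L \<mu> \<mu> \<le> ereal 0"
    by (rule rho_L_le) simp
  then show ?thesis
    using assms by (simp add: rho_ball_def le_less_trans)
qed

lemma quot_norm_le: "quot_norm a \<le> norm (a - t *\<^sub>R id_blinfun)"
  unfolding quot_norm_def by (rule cINF_lower) (auto intro: bdd_belowI[of _ 0])

definition vector_state :: "('h::real_inner \<Rightarrow>\<^sub>L 'h) set \<Rightarrow> 'h \<Rightarrow> ('h \<Rightarrow>\<^sub>L 'h) \<Rightarrow> real" where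
  "vector_state A x b = (if b \<in> A then inner (blinfun_apply b x) x else 0)"

locale ou_space =
  fixes A :: "('h::{real_inner,complete_space} \<Rightarrow>\<^sub>L 'h) set"
  assumes order_unit_space: "order_unit_space A"
begin

lemma subspace: "subspace A"
  and unit_mem [simp]: "id_blinfun \<in> A"
  and mem_self_adjoint: "a \<in> A \<Longrightarrow> self_adjoint a"
  using order_unit_space by (auto simp: order_unit_space_def)

lemma add_mem [simp]: "a \<in> A \<Longrightarrow> b \<in> A \<Longrightarrow> a + b \<in> A"
  and diff_mem [simp]: "a \<in> A \<Longrightarrow> b \<in> A \<Longrightarrow> a - b \<in> A"
  and scaleR_mem [simp]: "a \<in> A \<Longrightarrow> t *\<^sub>R a \<in> A"
  by (simp_all add: subspace subspace_add subspace_diff subspace_scale)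

lemma
  assumes "\<mu> \<in> state_space A"
  shows state_add: "a \<in> A \<Longrightarrow> b \<in> A \<Longrightarrow> \<mu> (a + b) = \<mu> a + \<mu> b"
    and state_scaleR: "a \<in> A \<Longrightarrow> \<mu> (t *\<^sub>R a) = t * \<mu> a"
    and state_nonneg: "a \<in> A \<Longrightarrow> op_le 0 a \<Longrightarrow> 0 \<le> \<mu> a"
    and state_unit: "\<mu> id_blinfun = 1"
  using assms by (auto simp: state_space_def)

lemma state_diff:
  assumes "\<mu> \<in> state_space A" and "a \<in> A" and "b \<in> A"
  shows "\<mu> (a - b) = \<mu> a - \<mu> b"
proof -
  have "\<mu> ((a - b) + b) = \<mu> (a - b) + \<mu> b"
    using assms by (intro state_add) simp_all
  then show ?thesis by simp
qed

lemma state_diff_unit: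
  assumes "\<mu> \<in> state_space A" and "a \<in> A"
  shows "\<mu> (a - c *\<^sub>R id_blinfun) = \<mu> a - c"
  using assms by (simp add: state_diff state_scaleR state_unit)

lemma abs_state_le_norm:
  assumes "\<mu> \<in> state_space A" and "a \<in> A"
  shows "\<bar>\<mu> a\<bar> \<le> norm a"
proof -
  have numerical_range: "0 \<le> norm a * inner x x - inner (blinfun_apply a x) x
      \<and> 0 \<le> norm a * inner x x + inner (blinfun_apply a x) x" for x
  proof -
    have "\<bar>inner (blinfun_apply a x) x\<bar> \<le> norm (blinfun_apply a x) * norm x"
      by (rule Cauchy_Schwarz_ineq2)
    also have "\<dots> \<le> norm a * norm x * norm x"
      by (simp add: mult_right_mono norm_blinfun)
    finally show ?thesis
      by (simp add: mult.assoc abs_le_iff flip: power2_eq_square power2_norm_eq_inner)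
  qed
  have "op_le 0 (norm a *\<^sub>R id_blinfun - a)" and "op_le 0 (norm a *\<^sub>R id_blinfun + a)"
    using numerical_range
    by (simp_all add: op_le_def blinfun.diff_left blinfun.add_left blinfun.scaleR_left
        inner_diff_left inner_add_left)
  then have "0 \<le> \<mu> (norm a *\<^sub>R id_blinfun - a)" and "0 \<le> \<mu> (norm a *\<^sub>R id_blinfun + a)"
    using assms by (simp_all add: state_nonneg)
  then have "0 \<le> norm a - \<mu> a" and "0 \<le> norm a + \<mu> a"
    using assms by (simp_all add: state_diff state_add state_scaleR state_unit)
  then show ?thesis by linarith
qed

lemma vector_state_mem:
  assumes "norm x = 1"
  shows "vector_state A x \<in> state_space A"
proof -
  have "inner x x = 1"
    using assms by (simp add: power2_norm_eq_inner[symmetric])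
  then show ?thesis
    by (auto simp: state_space_def vector_state_def op_le_def blinfun.add_left blinfun.scaleR_left
        inner_add_left)
qed

lemma norm_le_if_abs_states_le:
  assumes "a \<in> A" and "0 \<le> M" and states: "\<And>\<mu>. \<mu> \<in> state_space A \<Longrightarrow> \<bar>\<mu> a\<bar> \<le> M"
  shows "norm a \<le> M"
proof (rule norm_blinfun_le_numerical_radius[OF mem_self_adjoint[OF \<open>a \<in> A\<close>] \<open>0 \<le> M\<close>])
  fix x
  show "\<bar>inner (blinfun_apply a x) x\<bar> \<le> M * (norm x)\<^sup>2"
  proof (cases "x = 0")
    case False
    define u where "u = x /\<^sub>R norm x"
    have "norm u = 1"
      using False by (simp add: u_def)
    then have "\<bar>inner (blinfun_apply a u) u\<bar> \<le> M"
      using states[OF vector_state_mem] \<open>a \<in> A\<close> by (simp add: vector_state_def)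
    then have "\<bar>inner (blinfun_apply a u) u\<bar> * (norm x)\<^sup>2 \<le> M * (norm x)\<^sup>2"
      by (rule mult_right_mono) simp
    moreover have "inner (blinfun_apply a x) x = inner (blinfun_apply a u) u * (norm x)\<^sup>2"
      using False by (simp add: u_def blinfun.scaleR_right power2_eq_square field_simps)
    ultimately show ?thesis
      by (simp add: abs_mult)
  qed simp
qed

lemma abs_state_diff_le_quot_norm:
  assumes "\<mu> \<in> state_space A" and "\<nu> \<in> state_space A" and "a \<in> A"
  shows "\<bar>\<mu> a - \<nu> a\<bar> \<le> 2 * quot_norm a"
proof -
  have "\<bar>\<mu> a - \<nu> a\<bar> / 2 \<le> norm (a - t *\<^sub>R id_blinfun)" for t
  proof -
    have "\<bar>\<mu> a - \<nu> a\<bar> = \<bar>\<mu> (a - t *\<^sub>R id_blinfun) - \<nu> (a - t *\<^sub>R id_blinfun)\<bar>"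
      using assms by (simp add: state_diff_unit)
    also have "\<dots> \<le> 2 * norm (a - t *\<^sub>R id_blinfun)"
      using abs_state_le_norm[OF assms(1), of "a - t *\<^sub>R id_blinfun"]
        abs_state_le_norm[OF assms(2), of "a - t *\<^sub>R id_blinfun"] \<open>a \<in> A\<close>
      by (simp add: abs_diff_le_iff abs_le_iff)
    finally show ?thesis by simp
  qed
  then have "\<bar>\<mu> a - \<nu> a\<bar> / 2 \<le> quot_norm a"
    unfolding quot_norm_def by (intro cINF_greatest) auto
  then show ?thesis by simp
qed

lemma quot_norm_le_if_abs_state_diff_le:
  assumes "a \<in> A" and "0 \<le> M"
    and oscillation: "\<And>\<mu> \<nu>. \<mu> \<in> state_space A \<Longrightarrow> \<nu> \<in> state_space A \<Longrightarrow> \<bar>\<mu> a - \<nu> a\<bar> \<le> M"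
  shows "quot_norm a \<le> M"
proof -
  obtain t where t: "\<And>\<mu>. \<mu> \<in> state_space A \<Longrightarrow> \<bar>\<mu> a - t\<bar> \<le> M"
    \<comment> \<open>there are no states only if \<open>'h\<close> is trivial; then any \<open>t\<close> will do\<close>
  proof (cases "state_space A = {}")
    case False
    then obtain \<mu>\<^sub>0 where "\<mu>\<^sub>0 \<in> state_space A" by blast
    then show thesis using oscillation that by blast
  qed simp
  have "norm (a - t *\<^sub>R id_blinfun) \<le> M"
    using assms(1,2) t by (intro norm_le_if_abs_states_le) (simp_all add: state_diff_unit)
  then show ?thesis
    using quot_norm_le[of a t] by linarith
qed

theorem rho_L_bounded_iff_quot_norm_bounded:
  "(\<exists>M. \<forall>\<mu>\<in>state_space A. \<forall>\<nu>\<in>state_space A. rho_L A L \<mu> \<nu> \<le> ereal M)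
    \<longleftrightarrow> (\<exists>M. \<forall>a\<in>lip_ball A L. quot_norm a \<le> M)"
proof
  assume "\<exists>M. \<forall>\<mu>\<in>state_space A. \<forall>\<nu>\<in>state_space A. rho_L A L \<mu> \<nu> \<le> ereal M"
  then obtain M where M: "\<And>\<mu> \<nu>. \<mu> \<in> state_space A \<Longrightarrow> \<nu> \<in> state_space A \<Longrightarrow> rho_L A L \<mu> \<nu> \<le> ereal M"
    by blast
  have "quot_norm a \<le> max M 0" if "a \<in> lip_ball A L" for a
  proof (rule quot_norm_le_if_abs_state_diff_le)
    fix \<mu> \<nu> assume "\<mu> \<in> state_space A" "\<nu> \<in> state_space A"
    then have "ereal \<bar>\<mu> a - \<nu> a\<bar> \<le> ereal M"
      using abs_diff_le_rho_L[OF that] M order.trans by blast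
    then show "\<bar>\<mu> a - \<nu> a\<bar> \<le> max M 0" by simp
  qed (use that lip_ball_subset in auto)
  then show "\<exists>M. \<forall>a\<in>lip_ball A L. quot_norm a \<le> M" by blast
next
  assume "\<exists>M. \<forall>a\<in>lip_ball A L. quot_norm a \<le> M"
  then obtain M where M: "\<And>a. a \<in> lip_ball A L \<Longrightarrow> quot_norm a \<le> M" by blast
  have "rho_L A L \<mu> \<nu> \<le> ereal (2 * M)" if "\<mu> \<in> state_space A" "\<nu> \<in> state_space A" for \<mu> \<nu>
  proof (rule rho_L_le)
    fix a assume "a \<in> lip_ball A L"
    then show "\<bar>\<mu> a - \<nu> a\<bar> \<le> 2 * M"
      using abs_state_diff_le_quot_norm[OF that] M lip_ball_subset by fastforce
  qed
  then show "\<exists>M. \<forall>\<mu>\<in>state_space A. \<forall>\<nu>\<in>state_space A. rho_L A L \<mu> \<nu> \<le> ereal M" by blast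
qed

lemma topspace_weak_star [simp]: "topspace (weak_star_topology A) = state_space A"
  unfolding weak_star_topology_def topology_generated_by_topspace
  by (blast intro: unit_mem)

lemma weak_star_subbasic_openin:
  assumes "a \<in> A" and "open U"
  shows "openin (weak_star_topology A) {\<mu> \<in> state_space A. \<mu> a \<in> U}"
  unfolding weak_star_topology_def by (rule topology_generated_by_Basis) (use assms in blast)

lemma continuous_map_weak_starI:
  assumes "f ` topspace X \<subseteq> state_space A"
    and "\<And>a. a \<in> A \<Longrightarrow> continuous_map X euclidean (\<lambda>x. f x a)"
  shows "continuous_map X (weak_star_topology A) f"
  unfolding weak_star_topology_def continuous_on_generated_topo_iff
proof (intro conjI allI impI)
  fix U assume "U \<in> {{\<mu> \<in> state_space A. \<mu> a \<in> V} | a V. a \<in> A \<and> open V}"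
  then obtain a V where "U = {\<mu> \<in> state_space A. \<mu> a \<in> V}" "a \<in> A" "open V" by blast
  then have "openin X {x \<in> topspace X. f x a \<in> V}"
    using assms(2) openin_continuous_map_preimage open_openin by blast
  moreover have "f -` U \<inter> topspace X = {x \<in> topspace X. f x a \<in> V}"
    using assms(1) \<open>U = _\<close> by auto
  ultimately show "openin X (f -` U \<inter> topspace X)"
    by simp
qed (use assms(1) topspace_weak_star in \<open>simp add: weak_star_topology_def\<close>)

lemma closed_state_space: "closed (state_space A)"
  unfolding state_space_def Ball_def
  by (intro closed_Collect_conj closed_Collect_all closed_Collect_imp open_Collect_const
      closed_Collect_eq closed_Collect_le continuous_intros continuous_on_product_coordinates)

lemma compactin_weak_star: "compactin (weak_star_topology A) (state_space A)"
proof -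
  have "compactin (product_topology (\<lambda>_. euclidean) UNIV) (\<Pi>\<^sub>E b\<in>UNIV. {-norm b..norm b})"
    by (simp add: compactin_PiE)
  then have "compact (\<Pi>\<^sub>E b\<in>UNIV. {-norm b..norm b})"
    by (simp add: euclidean_product_topology)
  moreover have "\<mu> b \<in> {-norm b..norm b}" if "\<mu> \<in> state_space A" for \<mu> b
  proof (cases "b \<in> A")
    case True
    then show ?thesis
      using abs_state_le_norm[OF that True] by (simp add: abs_le_iff)
  qed (use that in \<open>simp add: state_space_def\<close>)
  then have "state_space A \<subseteq> (\<Pi>\<^sub>E b\<in>UNIV. {-norm b..norm b})"
    by (auto simp: PiE_UNIV_domain)
  ultimately have "compact (state_space A)"
    using closed_state_space compact_Int_closed inf.absorb2 by metis
  then have "compactin (top_of_set (state_space A)) (state_space A)"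
    by (simp add: compactin_subtopology)
  moreover have "continuous_map (top_of_set (state_space A)) (weak_star_topology A) id"
    by (intro continuous_map_weak_starI)
      (auto intro: continuous_on_product_then_coordinatewise continuous_on_id)
  ultimately show ?thesis
    using image_compactin by fastforce
qed

lemma state_space_convex:
  assumes "\<mu> \<in> state_space A" and "\<nu> \<in> state_space A" and "0 \<le> t" and "t \<le> 1"
  shows "(\<lambda>b. (1 - t) * \<mu> b + t * \<nu> b) \<in> state_space A"
proof -
  have "0 \<le> (1 - t) * \<mu> b + t * \<nu> b" if "b \<in> A" and "op_le 0 b" for b
    using assms that state_nonneg by (intro add_nonneg_nonneg mult_nonneg_nonneg) auto
  then show ?thesis
    using assms by (auto simp: state_space_def algebra_simps)
qed

lemma state_difference_bounded_if_rho_ball_open: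
  assumes open_ball: "openin (weak_star_topology A) (rho_ball A L \<mu> 1)"
    and "\<mu> \<in> state_space A" and "\<nu> \<in> state_space A"
  shows "\<exists>M. \<forall>a\<in>lip_ball A L. \<bar>\<mu> a - \<nu> a\<bar> \<le> M"
proof -
  define \<gamma> where "\<gamma> t = (\<lambda>b. (1 - t) * \<mu> b + t * \<nu> b)" for t
  have "continuous_map (top_of_set {0..1}) (weak_star_topology A) \<gamma>"
  proof (rule continuous_map_weak_starI)
    show "\<gamma> ` topspace (top_of_set {0..1}) \<subseteq> state_space A"
      using assms(2,3) by (auto simp: \<gamma>_def intro: state_space_convex)
    show "continuous_map (top_of_set {0..1}) euclidean (\<lambda>t. \<gamma> t a)" for a
      unfolding \<gamma>_def continuous_map_iff_continuous by (intro continuous_intros)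
  qed
  then have "openin (top_of_set {0..1}) {t \<in> {0..1}. \<gamma> t \<in> rho_ball A L \<mu> 1}"
    using openin_continuous_map_preimage[OF _ open_ball] by fastforce
  moreover have "0 \<in> {t \<in> {0..1}. \<gamma> t \<in> rho_ball A L \<mu> 1}"
    using centre_in_rho_ball[OF assms(2)] by (simp add: \<gamma>_def)
  ultimately obtain e where "e > 0"
    and e: "\<And>t. t \<in> {0..1} \<Longrightarrow> dist t 0 < e \<Longrightarrow> \<gamma> t \<in> rho_ball A L \<mu> 1"
    unfolding openin_euclidean_subtopology_iff by blast
  define t where "t = min (e / 2) 1"
  have "t > 0" and t: "rho_L A L \<mu> (\<gamma> t) < ereal 1"
    using e[of t] \<open>e > 0\<close> by (auto simp: t_def dist_real_def rho_ball_def)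
  have "\<bar>\<mu> a - \<nu> a\<bar> \<le> 1 / t" if "a \<in> lip_ball A L" for a
  proof -
    have "\<mu> a - \<gamma> t a = t * (\<mu> a - \<nu> a)"
      by (simp add: \<gamma>_def algebra_simps)
    then have "t * \<bar>\<mu> a - \<nu> a\<bar> = \<bar>\<mu> a - \<gamma> t a\<bar>"
      using \<open>t > 0\<close> by (simp add: abs_mult)
    also have "\<dots> < 1"
      by (rule abs_diff_less_if_rho_L_less[OF t that])
    finally show ?thesis
      using \<open>t > 0\<close> by (simp add: field_simps)
  qed
  then show ?thesis by blast
qed

lemma finite_rho_net:
  assumes open_balls: "\<And>\<mu>. \<mu> \<in> state_space A \<Longrightarrow> openin (weak_star_topology A) (rho_ball A L \<mu> \<epsilon>)"
    and "\<epsilon> > 0"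
  obtains G where "finite G" and "G \<subseteq> state_space A"
    and "\<And>\<nu>. \<nu> \<in> state_space A \<Longrightarrow> \<exists>g\<in>G. rho_L A L g \<nu> < ereal \<epsilon>"
proof -
  have "state_space A \<subseteq> \<Union>((\<lambda>\<mu>. rho_ball A L \<mu> \<epsilon>) ` state_space A)"
    using centre_in_rho_ball \<open>\<epsilon> > 0\<close> by blast
  then obtain \<F> where "finite \<F>" "\<F> \<subseteq> (\<lambda>\<mu>. rho_ball A L \<mu> \<epsilon>) ` state_space A"
    and "state_space A \<subseteq> \<Union>\<F>"
    using compactin_weak_star open_balls unfolding compactin_def by (metis (no_types, lifting) imageE)
  then obtain G where "G \<subseteq> state_space A" "finite G" "\<F> = (\<lambda>\<mu>. rho_ball A L \<mu> \<epsilon>) ` G"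
    by (meson finite_subset_image)
  then show thesis
    using that \<open>state_space A \<subseteq> \<Union>\<F>\<close> by (force simp: rho_ball_def)
qed

lemma quot_norm_diff_le_if_close_on_rho_net:
  assumes near: "\<And>\<nu>. \<nu> \<in> state_space A \<Longrightarrow> \<exists>g\<in>G. rho_L A L g \<nu> < ereal \<epsilon>"
    and close: "\<And>g g'. g \<in> G \<Longrightarrow> g' \<in> G \<Longrightarrow> \<bar>(g a - g' a) - (g f - g' f)\<bar> < \<epsilon>"
    and a: "a \<in> lip_ball A L" and f: "f \<in> lip_ball A L" and "\<epsilon> > 0"
  shows "quot_norm (a - f) \<le> 5 * \<epsilon>"
proof (rule quot_norm_le_if_abs_state_diff_le)
  have "a \<in> A" "f \<in> A"
    using a f lip_ball_subset by auto
  then show "a - f \<in> A" by simp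
  fix \<mu> \<nu> assume "\<mu> \<in> state_space A" "\<nu> \<in> state_space A"
  then obtain g g' where "g \<in> G" "g' \<in> G"
    and "rho_L A L g \<mu> < ereal \<epsilon>" "rho_L A L g' \<nu> < ereal \<epsilon>"
    using near by metis
  then have "\<bar>g a - \<mu> a\<bar> < \<epsilon>" "\<bar>g f - \<mu> f\<bar> < \<epsilon>" "\<bar>g' a - \<nu> a\<bar> < \<epsilon>" "\<bar>g' f - \<nu> f\<bar> < \<epsilon>"
    using a f by (auto intro: abs_diff_less_if_rho_L_less)
  moreover have "\<bar>(g a - g' a) - (g f - g' f)\<bar> < \<epsilon>"
    using close \<open>g \<in> G\<close> \<open>g' \<in> G\<close> by blast
  ultimately show "\<bar>\<mu> (a - f) - \<nu> (a - f)\<bar> \<le> 5 * \<epsilon>"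
    using \<open>a \<in> A\<close> \<open>f \<in> A\<close> \<open>\<mu> \<in> state_space A\<close> \<open>\<nu> \<in> state_space A\<close>
    by (simp add: state_diff abs_less_iff abs_le_iff)
qed (use \<open>\<epsilon> > 0\<close> in simp)

lemma quot_totally_bounded_if_rho_balls_open:
  assumes open_balls:
    "\<And>\<mu> r. \<mu> \<in> state_space A \<Longrightarrow> r > 0 \<Longrightarrow> openin (weak_star_topology A) (rho_ball A L \<mu> r)"
  shows "quot_totally_bounded (lip_ball A L)"
  unfolding quot_totally_bounded_def
proof (intro allI impI)
  fix e :: real assume "e > 0"
  define \<epsilon> where "\<epsilon> = e / 6"
  have "\<epsilon> > 0" using \<open>e > 0\<close> by (simp add: \<epsilon>_def)
  obtain G where "finite G" "G \<subseteq> state_space A"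
    and near: "\<And>\<nu>. \<nu> \<in> state_space A \<Longrightarrow> \<exists>g\<in>G. rho_L A L g \<nu> < ereal \<epsilon>"
    using finite_rho_net[OF open_balls \<open>\<epsilon> > 0\<close>] \<open>\<epsilon> > 0\<close> by blast
  have bounded: "\<exists>M. \<forall>a\<in>lip_ball A L. \<bar>fst p a - snd p a\<bar> \<le> M" if "p \<in> G \<times> G" for p
  proof -
    have "fst p \<in> state_space A" "snd p \<in> state_space A"
      using that \<open>G \<subseteq> state_space A\<close> by auto
    then show ?thesis
      using open_balls by (intro state_difference_bounded_if_rho_ball_open) simp_all
  qed
  obtain F where "finite F" "F \<subseteq> lip_ball A L"
    and F: "\<And>a. a \<in> lip_ball A L \<Longrightarrow>
      \<exists>f\<in>F. \<forall>p\<in>G \<times> G. \<bar>(fst p a - snd p a) - (fst p f - snd p f)\<bar> < \<epsilon>"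
    using finite_net_for_bounded_functions[of "G \<times> G" "lip_ball A L" "\<lambda>p a. fst p a - snd p a",
        OF finite_cartesian_product[OF \<open>finite G\<close> \<open>finite G\<close>] bounded \<open>\<epsilon> > 0\<close>]
    by blast
  have "\<exists>f\<in>F. quot_norm (a - f) < e" if a: "a \<in> lip_ball A L" for a
  proof -
    obtain f where "f \<in> F"
      and close: "\<And>g g'. g \<in> G \<Longrightarrow> g' \<in> G \<Longrightarrow> \<bar>(g a - g' a) - (g f - g' f)\<bar> < \<epsilon>"
      using F[OF a] by auto
    then have "quot_norm (a - f) \<le> 5 * \<epsilon>"
      using \<open>F \<subseteq> lip_ball A L\<close> a \<open>\<epsilon> > 0\<close>
      by (intro quot_norm_diff_le_if_close_on_rho_net[OF near close]) auto
    then have "quot_norm (a - f) < e"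
      using \<open>e > 0\<close> by (simp add: \<epsilon>_def)
    then show ?thesis
      using \<open>f \<in> F\<close> by blast
  qed
  then show "\<exists>F. finite F \<and> F \<subseteq> lip_ball A L \<and> (\<forall>a\<in>lip_ball A L. \<exists>f\<in>F. quot_norm (a - f) < e)"
    using \<open>finite F\<close> \<open>F \<subseteq> lip_ball A L\<close> by blast
qed

lemma rho_L_le_if_close_on_quot_net:
  assumes "\<mu> \<in> state_space A" and "\<nu> \<in> state_space A" and "\<nu>' \<in> state_space A"
    and d: "rho_L A L \<mu> \<nu> < ereal d"
    and F: "F \<subseteq> lip_ball A L" "\<And>a. a \<in> lip_ball A L \<Longrightarrow> \<exists>f\<in>F. quot_norm (a - f) < \<epsilon>"
    and close: "\<And>f. f \<in> F \<Longrightarrow> \<bar>\<nu> f - \<nu>' f\<bar> < \<epsilon>"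
  shows "rho_L A L \<mu> \<nu>' \<le> ereal (d + 3 * \<epsilon>)"
proof (rule rho_L_le)
  fix a assume a: "a \<in> lip_ball A L"
  then obtain f where "f \<in> F" and "quot_norm (a - f) < \<epsilon>"
    using F(2) by blast
  then have "a \<in> A" "f \<in> A"
    using a F(1) lip_ball_subset by auto
  have "\<bar>\<nu> (a - f) - \<nu>' (a - f)\<bar> \<le> 2 * quot_norm (a - f)"
    using assms(2,3) \<open>a \<in> A\<close> \<open>f \<in> A\<close> by (intro abs_state_diff_le_quot_norm) auto
  moreover have "\<bar>\<mu> a - \<nu> a\<bar> < d"
    by (rule abs_diff_less_if_rho_L_less[OF d a])
  moreover have "\<bar>\<nu> f - \<nu>' f\<bar> < \<epsilon>"
    using close \<open>f \<in> F\<close> by blast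
  ultimately show "\<bar>\<mu> a - \<nu>' a\<bar> \<le> d + 3 * \<epsilon>"
    using \<open>quot_norm (a - f) < \<epsilon>\<close> assms(2,3) \<open>a \<in> A\<close> \<open>f \<in> A\<close>
    by (simp add: state_diff abs_less_iff abs_le_iff)
qed

lemma rho_ball_weak_star_open_if_quot_totally_bounded:
  assumes tb: "quot_totally_bounded (lip_ball A L)" and "\<mu> \<in> state_space A"
  shows "openin (weak_star_topology A) (rho_ball A L \<mu> r)"
proof (subst openin_subopen, intro ballI)
  fix \<nu> assume "\<nu> \<in> rho_ball A L \<mu> r"
  then have "\<nu> \<in> state_space A" and "rho_L A L \<mu> \<nu> < ereal r"
    by (auto simp: rho_ball_def)
  then obtain d where d: "rho_L A L \<mu> \<nu> < ereal d" and "d < r"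
    using ereal_dense2 by (metis less_ereal.simps(1))
  define \<epsilon> where "\<epsilon> = (r - d) / 4"
  have "\<epsilon> > 0" using \<open>d < r\<close> by (simp add: \<epsilon>_def)
  obtain F where "finite F"
    and F: "F \<subseteq> lip_ball A L" "\<And>a. a \<in> lip_ball A L \<Longrightarrow> \<exists>f\<in>F. quot_norm (a - f) < \<epsilon>"
    using tb \<open>\<epsilon> > 0\<close> unfolding quot_totally_bounded_def by meson
  then have "F \<subseteq> A"
    using lip_ball_subset by blast
  define V where "V = (\<Inter>f\<in>F. {\<nu>' \<in> state_space A. \<nu>' f \<in> ball (\<nu> f) \<epsilon>}) \<inter> state_space A"
  have "openin (weak_star_topology A) {\<nu>' \<in> state_space A. \<nu>' f \<in> ball (\<nu> f) \<epsilon>}" if "f \<in> F" for f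
    using \<open>F \<subseteq> A\<close> that by (intro weak_star_subbasic_openin) auto
  then have "openin (weak_star_topology A)
      ((\<Inter>f\<in>F. {\<nu>' \<in> state_space A. \<nu>' f \<in> ball (\<nu> f) \<epsilon>}) \<inter> topspace (weak_star_topology A))"
    by (rule openin_INT[OF \<open>finite F\<close>])
  then have "openin (weak_star_topology A) V"
    by (simp add: V_def)
  moreover have "\<nu> \<in> V"
    using \<open>\<nu> \<in> state_space A\<close> \<open>\<epsilon> > 0\<close> by (simp add: V_def)
  moreover have "V \<subseteq> rho_ball A L \<mu> r"
  proof
    fix \<nu>' assume "\<nu>' \<in> V"
    then have "\<nu>' \<in> state_space A" and close: "\<And>f. f \<in> F \<Longrightarrow> \<bar>\<nu> f - \<nu>' f\<bar> < \<epsilon>"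
      by (auto simp: V_def dist_real_def)
    have "rho_L A L \<mu> \<nu>' \<le> ereal (d + 3 * \<epsilon>)"
      using \<open>\<mu> \<in> state_space A\<close> \<open>\<nu> \<in> state_space A\<close> \<open>\<nu>' \<in> state_space A\<close> d F close
      by (rule rho_L_le_if_close_on_quot_net)
    also have "\<dots> < ereal r"
      using \<open>d < r\<close> by (simp add: \<epsilon>_def field_simps)
    finally show "\<nu>' \<in> rho_ball A L \<mu> r"
      using \<open>\<nu>' \<in> state_space A\<close> by (simp add: rho_ball_def)
  qed
  ultimately show "\<exists>T. openin (weak_star_topology A) T \<and> \<nu> \<in> T \<and> T \<subseteq> rho_ball A L \<mu> r"
    by blast
qed

end

locale lip_ou_space = ou_space +
  fixes L :: "('h::{real_inner,complete_space} \<Rightarrow>\<^sub>L 'h) \<Rightarrow> real"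
  assumes seminorm: "seminorm_on A L"
begin

lemma seminorm_add: "a \<in> A \<Longrightarrow> b \<in> A \<Longrightarrow> L (a + b) \<le> L a + L b"
  and seminorm_scaleR: "a \<in> A \<Longrightarrow> L (t *\<^sub>R a) = \<bar>t\<bar> * L a"
  using seminorm by (auto simp: seminorm_on_def)

lemma seminorm_nonneg:
  assumes "a \<in> A"
  shows "0 \<le> L a"
proof -
  have "L (0 *\<^sub>R a) \<le> L a + L ((-1) *\<^sub>R a)"
    using seminorm_add[OF assms scaleR_mem[OF assms, of "-1"]] by simp
  then show ?thesis
    using seminorm_scaleR[OF assms, of 0] seminorm_scaleR[OF assms, of "-1"] by simp
qed

lemma scaled_mem_lip_ball:
  assumes "a \<in> A"
  shows "(1 / (L a + 1)) *\<^sub>R a \<in> lip_ball A L"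
proof -
  have "L ((1 / (L a + 1)) *\<^sub>R a) = L a / (L a + 1)"
    using seminorm_scaleR[OF assms] seminorm_nonneg[OF assms] by simp
  also have "\<dots> \<le> 1"
    using seminorm_nonneg[OF assms] by simp
  finally show ?thesis
    using assms by (simp add: lip_ball_def)
qed

lemma weak_star_subbasic_openin_rho:
  assumes "a \<in> A" and "open U"
  shows "openin (rho_topology A L) {\<mu> \<in> state_space A. \<mu> a \<in> U}"
proof (subst openin_subopen, intro ballI)
  fix \<mu> assume "\<mu> \<in> {\<mu> \<in> state_space A. \<mu> a \<in> U}"
  then have "\<mu> \<in> state_space A" and "\<mu> a \<in> U" by auto
  then obtain e where "e > 0" and "ball (\<mu> a) e \<subseteq> U"
    using \<open>open U\<close> openE by blast
  define c where "c = L a + 1"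
  have "c > 0"
    using seminorm_nonneg[OF \<open>a \<in> A\<close>] by (simp add: c_def)
  have "e / c > 0"
    using \<open>e > 0\<close> \<open>c > 0\<close> by simp
  have "openin (rho_topology A L) (rho_ball A L \<mu> (e / c))"
    unfolding rho_topology_eq
    by (rule topology_generated_by_Basis) (use \<open>\<mu> \<in> state_space A\<close> \<open>e / c > 0\<close> in blast)
  moreover have "\<mu> \<in> rho_ball A L \<mu> (e / c)"
    using \<open>\<mu> \<in> state_space A\<close> \<open>e / c > 0\<close> by (rule centre_in_rho_ball)
  moreover have "rho_ball A L \<mu> (e / c) \<subseteq> {\<mu> \<in> state_space A. \<mu> a \<in> U}"
  proof
    fix \<nu> assume "\<nu> \<in> rho_ball A L \<mu> (e / c)"
    then have "\<nu> \<in> state_space A"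
      and "\<bar>\<mu> ((1 / c) *\<^sub>R a) - \<nu> ((1 / c) *\<^sub>R a)\<bar> < e / c"
      using abs_diff_less_if_rho_L_less scaled_mem_lip_ball[OF \<open>a \<in> A\<close>]
      by (auto simp: rho_ball_def c_def)
    moreover have "\<mu> ((1 / c) *\<^sub>R a) - \<nu> ((1 / c) *\<^sub>R a) = (\<mu> a - \<nu> a) / c"
      using \<open>\<mu> \<in> state_space A\<close> \<open>\<nu> \<in> state_space A\<close> \<open>a \<in> A\<close>
      by (simp add: state_scaleR diff_divide_distrib)
    ultimately have "\<nu> a \<in> ball (\<mu> a) e"
      using \<open>c > 0\<close> by (simp add: dist_real_def field_simps)
    then show "\<nu> \<in> {\<mu> \<in> state_space A. \<mu> a \<in> U}"
      using \<open>\<nu> \<in> state_space A\<close> \<open>ball (\<mu> a) e \<subseteq> U\<close> by blast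
  qed
  ultimately show "\<exists>T. openin (rho_topology A L) T \<and> \<mu> \<in> T \<and> T \<subseteq> {\<mu> \<in> state_space A. \<mu> a \<in> U}"
    by blast
qed

theorem rho_topology_eq_weak_star_iff:
  "rho_topology A L = weak_star_topology A
    \<longleftrightarrow> (\<forall>\<mu>\<in>state_space A. \<forall>r>0. openin (weak_star_topology A) (rho_ball A L \<mu> r))"
proof
  assume "rho_topology A L = weak_star_topology A"
  then show "\<forall>\<mu>\<in>state_space A. \<forall>r>0. openin (weak_star_topology A) (rho_ball A L \<mu> r)"
    unfolding rho_topology_eq by (metis (mono_tags, lifting) mem_Collect_eq topology_generated_by_Basis)
next
  assume balls: "\<forall>\<mu>\<in>state_space A. \<forall>r>0. openin (weak_star_topology A) (rho_ball A L \<mu> r)"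
  show "rho_topology A L = weak_star_topology A"
    unfolding topology_eq
  proof (intro allI iffI)
    fix U assume "openin (rho_topology A L) U"
    then show "openin (weak_star_topology A) U"
      unfolding rho_topology_eq by (rule openin_topology_generated_by_coarsest) (use balls in auto)
  next
    fix U assume "openin (weak_star_topology A) U"
    then show "openin (rho_topology A L) U"
      unfolding weak_star_topology_def
      by (rule openin_topology_generated_by_coarsest) (auto intro: weak_star_subbasic_openin_rho)
  qed
qed

end

theorem theorem2p1:
  fixes A :: "('h::{real_inner,complete_space} \<Rightarrow>\<^sub>L 'h) set"
    and L :: "('h \<Rightarrow>\<^sub>L 'h) \<Rightarrow> real"
  assumes "order_unit_space A"
    and "seminorm_on A L"
    and "L id_blinfun = 0"
  shows "((\<exists>M::real. \<forall>\<mu>\<in>state_space A. \<forall>\<nu>\<in>state_space A. rho_L A L \<mu> \<nu> \<le> ereal M)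
            \<longleftrightarrow> (\<exists>M::real. \<forall>a\<in>lip_ball A L. quot_norm a \<le> M))
       \<and> (rho_topology A L = weak_star_topology A
            \<longleftrightarrow> quot_totally_bounded (lip_ball A L))"
proof -
  interpret lip_ou_space A L
    using assms(1,2) by (intro lip_ou_space.intro ou_space.intro lip_ou_space_axioms.intro)
  show ?thesis
    using rho_L_bounded_iff_quot_norm_bounded rho_topology_eq_weak_star_iff
      quot_totally_bounded_if_rho_balls_open rho_ball_weak_star_open_if_quot_totally_bounded
    by blast
qed

end
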